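(* Let $K=2$ and let $(X_{t,1},X_{t,2})$ have joint density $p_{\mathcal{X}}$ on $\mathbb{R}^{2d}$ satisfying the relaxed symmetry condition with constant $\nu$. Then for every fixed vector $\beta\in\mathbb{R}^d$, $$\sum_{i=1}^2\mathbb{E}_{\mathcal{X}_t}\Big[X_{t,i}X_{t,i}^\top\mathbb{1}\{X_{t,i}=\arg\max_{X\in\mathcal{X}_t}X^\top\beta\}\Big]\succcurlyeq\nu^{-1}\Sigma,$$ where $\Sigma=\frac12\mathbb{E}[X_{t,1}X_{t,1}^\top+X_{t,2}X_{t,2}^\top]$.
   Context: $\mathcal{X}_t=\{X_{t,1},X_{t,2}\}\subset\mathbb{R}^d$, features bounded ($\|X_{t,i}\|_2\le x_{\max}$). Relaxed symmetry: there is $\nu<\infty$ with $p_{\mathcal{X}}(-\mathbf{x})/p_{\mathcal{X}}(\mathbf{x})\le\nu$ for all $\mathbf{x}\in\mathbb{R}^{2d}$. $\succcurlyeq$ is the Loewner (positive semidefinite) order. *)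

theory Defs
  imports "HOL-Analysis.Analysis"
begin

definition outer :: "real^'d \<Rightarrow> real^'d^'d" where
  "outer x = (\<chi> j k. x $ j * x $ k)"

definition psd :: "real^'d^'d \<Rightarrow> bool" where
  "psd A \<longleftrightarrow> transpose A = A \<and> (\<forall>v. 0 \<le> v \<bullet> (A *v v))"

definition loewner_ge :: "real^'d^'d \<Rightarrow> real^'d^'d \<Rightarrow> bool" where
  "loewner_ge A B \<longleftrightarrow> psd (A - B)"

text \<open>Entrywise expectation of a matrix-valued function of (X_1,X_2) whose
  joint Lebesgue density on R^d x R^d = R^{2d} is p.\<close>
definition mat_expect ::
  "((real^'d) \<times> (real^'d) \<Rightarrow> real) \<Rightarrow> ((real^'d) \<times> (real^'d) \<Rightarrow> real^'d^'d) \<Rightarrow> real^'d^'d" where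
  "mat_expect p F = (\<chi> j k. \<integral> z. p z * (F z $ j $ k) \<partial>lborel)"

end

theory Submission
  imports Defs
begin

text \<open>Fix a direction \<open>v\<close> and let \<open>g z\<close> be the quadratic form in \<open>v\<close> of the outer products of
  the \<open>\<beta>\<close>-maximising contexts at \<open>z = (x1, x2)\<close>. Negating \<open>z\<close> reverses the comparison of
  \<open>x1 \<bullet> \<beta>\<close> and \<open>x2 \<bullet> \<beta>\<close> but not the squares of \<open>v \<bullet> x1\<close> and \<open>v \<bullet> x2\<close>, so
  \<open>(v \<bullet> x1)\<^sup>2 + (v \<bullet> x2)\<^sup>2 \<le> g z + g (- z)\<close>. Integrating against \<open>p\<close> and substituting
  \<open>z \<mapsto> - z\<close> in the last term, relaxed symmetry bounds it by \<open>\<nu>\<close> times the first, so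
  \<open>2 v\<^sup>T \<Sigma> v \<le> (1 + \<nu>) E[g] \<le> 2 \<nu> E[g]\<close>; here \<open>\<nu> \<ge> 1\<close> follows from the same
  substitution applied to the total mass of \<open>p\<close>.\<close>

lemma outer_nth: "outer x $ j = x $ j *\<^sub>R x"
  by (simp add: outer_def vec_eq_iff)

lemma norm_outer: "norm (outer x) = (norm x)\<^sup>2"
proof -
  have "norm (outer x) = L2_set (\<lambda>j. \<bar>x $ j\<bar> * norm x) UNIV"
    by (simp only: norm_vec_def[of "outer x"] outer_nth norm_scaleR real_norm_def)
  also have "\<dots> = norm x * norm x"
    by (simp add: L2_set_left_distrib[symmetric] norm_vec_def[of x])
  finally show ?thesis
    by (simp add: power2_eq_square)
qed

lemma quadratic_form_outer: "v \<bullet> (outer x *v v) = (v \<bullet> x)\<^sup>2"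
  by (simp add: outer_def inner_vec_def matrix_vector_mult_def power2_eq_square
      sum_product sum_distrib_left mult_ac)

lemma borel_measurable_outer [measurable]: "outer \<in> borel_measurable borel"
  unfolding outer_def by (intro borel_measurable_continuous_onI continuous_intros)

lemma lborel_distr_uminus_euclidean:
  "distr lborel borel uminus = (lborel :: 'a::euclidean_space measure)"
  by (subst lborel_affine[of "-1" 0]) (auto simp: density_1 one_ennreal_def[symmetric])

lemma
  fixes f :: "'a::euclidean_space \<Rightarrow> real"
  assumes "f \<in> borel_measurable borel"
  shows integrable_reflect_iff: "integrable lborel (\<lambda>x. f (- x)) \<longleftrightarrow> integrable lborel f"
    and integral_reflect: "(\<integral>x. f (- x) \<partial>lborel) = (\<integral>x. f x \<partial>lborel)"
  using integrable_distr_eq[of uminus lborel borel f] integral_distr[of uminus lborel borel f] assms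
  by (simp_all add: lborel_distr_uminus_euclidean)

lemma
  fixes p g :: "'a::euclidean_space \<Rightarrow> real"
  assumes [measurable]: "p \<in> borel_measurable borel" "g \<in> borel_measurable borel"
    and p_nonneg: "\<And>z. 0 \<le> p z" and g_nonneg: "\<And>z. 0 \<le> g z"
    and relaxed_sym: "\<And>z. p (- z) \<le> \<nu> * p z"
    and pg_int: "integrable lborel (\<lambda>z. p z * g z)"
  shows integrable_reflected_density: "integrable lborel (\<lambda>z. p z * g (- z))"
    and integral_reflected_density_le:
      "(\<integral>z. p z * g (- z) \<partial>lborel) \<le> \<nu> * (\<integral>z. p z * g z \<partial>lborel)"
proof -
  have le: "p (- z) * g z \<le> \<nu> * (p z * g z)" for z
    using mult_right_mono[OF relaxed_sym g_nonneg] by (simp add: mult.assoc)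
  have dom: "integrable lborel (\<lambda>z. p (- z) * g z)"
  proof (rule Bochner_Integration.integrable_bound[OF integrable_mult_right[OF pg_int, of \<nu>]])
    show "AE z in lborel. norm (p (- z) * g z) \<le> norm (\<nu> * (p z * g z))"
      using le p_nonneg g_nonneg by (intro AE_I2) (simp add: order_trans[OF _ abs_ge_self])
  qed simp
  then show "integrable lborel (\<lambda>z. p z * g (- z))"
    using integrable_reflect_iff[of "\<lambda>z. p (- z) * g z"] by simp
  have "(\<integral>z. p z * g (- z) \<partial>lborel) = (\<integral>z. p (- z) * g z \<partial>lborel)"
    using integral_reflect[of "\<lambda>z. p z * g (- z)"] by simp
  also have "\<dots> \<le> (\<integral>z. \<nu> * (p z * g z) \<partial>lborel)"
    using dom pg_int le by (intro integral_mono) auto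
  finally show "(\<integral>z. p z * g (- z) \<partial>lborel) \<le> \<nu> * (\<integral>z. p z * g z \<partial>lborel)"
    by simp
qed

lemma integral_le_of_reflection_cover:
  fixes p g h :: "'a::euclidean_space \<Rightarrow> real"
  assumes [measurable]: "p \<in> borel_measurable borel" "g \<in> borel_measurable borel"
    and p_nonneg: "\<And>z. 0 \<le> p z" and p_int: "integrable lborel p"
    and p_one: "(\<integral>z. p z \<partial>lborel) = 1"
    and relaxed_sym: "\<And>z. p (- z) \<le> \<nu> * p z"
    and g_nonneg: "\<And>z. 0 \<le> g z" and pg_int: "integrable lborel (\<lambda>z. p z * g z)"
    and ph_int: "integrable lborel (\<lambda>z. p z * h z)"
    and cover: "\<And>z. h z \<le> g z + g (- z)"
  shows "(\<integral>z. p z * h z \<partial>lborel) \<le> 2 * \<nu> * (\<integral>z. p z * g z \<partial>lborel)"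
proof -
  have nu_ge_1: "1 \<le> \<nu>"
    using integral_reflected_density_le[of p "\<lambda>_. 1"] assms by simp
  have pg_nonneg: "0 \<le> (\<integral>z. p z * g z \<partial>lborel)"
    using p_nonneg g_nonneg by (simp add: integral_nonneg)
  note pg_reflect_int = integrable_reflected_density[OF assms(1,2) p_nonneg g_nonneg relaxed_sym pg_int]
  have "(\<integral>z. p z * h z \<partial>lborel) \<le> (\<integral>z. p z * g z + p z * g (- z) \<partial>lborel)"
    using ph_int pg_int pg_reflect_int cover p_nonneg
    by (intro integral_mono Bochner_Integration.integrable_add)
      (auto simp flip: distrib_left intro!: mult_left_mono)
  also have "\<dots> = (\<integral>z. p z * g z \<partial>lborel) + (\<integral>z. p z * g (- z) \<partial>lborel)"
    using pg_int pg_reflect_int by simp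
  also have "\<dots> \<le> (1 + \<nu>) * (\<integral>z. p z * g z \<partial>lborel)"
    using integral_reflected_density_le[OF assms(1,2) p_nonneg g_nonneg relaxed_sym pg_int]
    by (simp add: distrib_right)
  also have "\<dots> \<le> 2 * \<nu> * (\<integral>z. p z * g z \<partial>lborel)"
    using nu_ge_1 pg_nonneg by (intro mult_right_mono) auto
  finally show ?thesis .
qed

lemma mat_expect_add:
  assumes "\<And>j k. integrable lborel (\<lambda>z. p z * (F z $ j $ k))"
    and "\<And>j k. integrable lborel (\<lambda>z. p z * (G z $ j $ k))"
  shows "mat_expect p F + mat_expect p G = mat_expect p (\<lambda>z. F z + G z)"
  using assms by (simp add: mat_expect_def vec_eq_iff distrib_left)

lemma transpose_mat_expect: "transpose (mat_expect p F) = mat_expect p (\<lambda>z. transpose (F z))"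
  by (simp add: mat_expect_def transpose_def vec_eq_iff)

lemma scaled_quadratic_form_eq_sum:
  "c * (v \<bullet> (A *v v)) = (\<Sum>j\<in>UNIV. \<Sum>k\<in>UNIV. (v $ j * v $ k) * (c * (A $ j $ k)))"
  by (simp add: inner_vec_def matrix_vector_mult_def sum_distrib_left mult_ac)

lemma integrable_density_quadratic_form:
  assumes "\<And>j k. integrable lborel (\<lambda>z. p z * (F z $ j $ k))"
  shows "integrable lborel (\<lambda>z. p z * (v \<bullet> (F z *v v)))"
  unfolding scaled_quadratic_form_eq_sum using assms by simp

lemma borel_measurable_quadratic_form: "(\<lambda>A::real^'n^'n. v \<bullet> (A *v v)) \<in> borel_measurable borel"
  unfolding inner_vec_def matrix_vector_mult_def by (intro borel_measurable_continuous_onI continuous_intros)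

lemma quadratic_form_mat_expect:
  assumes "\<And>j k. integrable lborel (\<lambda>z. p z * (F z $ j $ k))"
  shows "v \<bullet> (mat_expect p F *v v) = (\<integral>z. p z * (v \<bullet> (F z *v v)) \<partial>lborel)"
proof -
  have "(\<integral>z. p z * (v \<bullet> (F z *v v)) \<partial>lborel)
      = (\<integral>z. (\<Sum>j\<in>UNIV. \<Sum>k\<in>UNIV. (v $ j * v $ k) * (p z * (F z $ j $ k))) \<partial>lborel)"
    by (simp only: scaled_quadratic_form_eq_sum)
  also have "\<dots> = (\<Sum>j\<in>UNIV. \<Sum>k\<in>UNIV. (v $ j * v $ k) * (\<integral>z. p z * (F z $ j $ k) \<partial>lborel))"
    using assms by simp
  also have "\<dots> = v \<bullet> (mat_expect p F *v v)"
    by (simp add: inner_vec_def matrix_vector_mult_def mat_expect_def sum_distrib_left mult_ac)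
  finally show ?thesis ..
qed

lemma integrable_density_mult_mat_entry:
  fixes p :: "'a::euclidean_space \<Rightarrow> real" and F :: "'a \<Rightarrow> real^'n^'m"
  assumes p_int: "integrable lborel p" and p_nonneg: "\<And>z. 0 \<le> p z"
    and F_meas: "F \<in> borel_measurable borel"
    and F_bounded: "\<And>z. 0 < p z \<Longrightarrow> norm (F z) \<le> C"
  shows "integrable lborel (\<lambda>z. p z * (F z $ j $ k))"
proof (rule Bochner_Integration.integrable_bound[OF integrable_mult_left[OF p_int, of C]])
  have "(\<lambda>A::real^'n^'m. A $ j $ k) \<in> borel_measurable borel"
    by (intro borel_measurable_continuous_onI continuous_intros)
  then show "(\<lambda>z. p z * (F z $ j $ k)) \<in> borel_measurable lborel"
    using F_meas p_int by (simp add: borel_measurable_integrable measurable_compose[of F])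
  have "norm (p z * (F z $ j $ k)) \<le> norm (p z * C)" for z
  proof (cases "p z = 0")
    case False
    then have "0 < p z"
      using p_nonneg[of z] by simp
    have "\<bar>F z $ j $ k\<bar> \<le> norm (F z $ j)"
      by (rule component_le_norm_cart)
    also have "\<dots> \<le> norm (F z)"
      by (rule Finite_Cartesian_Product.norm_nth_le)
    also have "\<dots> \<le> \<bar>C\<bar>"
      using F_bounded[OF \<open>0 < p z\<close>] by simp
    finally show ?thesis
      using \<open>0 < p z\<close> by (simp add: abs_mult)
  qed simp
  then show "AE z in lborel. norm (p z * (F z $ j $ k)) \<le> norm (p z * C)"
    by simp
qed

lemma integrable_density_mult_entry_outer_dominated:
  fixes p :: "(real^'d) \<times> (real^'d) \<Rightarrow> real" and F :: "(real^'d) \<times> (real^'d) \<Rightarrow> real^'n^'m"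
  assumes p_int: "integrable lborel p" and p_nonneg: "\<And>z. 0 \<le> p z"
    and bounded: "\<And>x1 x2. 0 < p (x1, x2) \<Longrightarrow> norm x1 \<le> r \<and> norm x2 \<le> r"
    and F_meas: "F \<in> borel_measurable (borel \<Otimes>\<^sub>M borel)"
    and F_norm: "\<And>x1 x2. norm (F (x1, x2)) \<le> (norm x1)\<^sup>2 + (norm x2)\<^sup>2"
  shows "integrable lborel (\<lambda>z. p z * (F z $ j $ k))"
proof (rule integrable_density_mult_mat_entry[OF p_int p_nonneg, of F "2 * r\<^sup>2"])
  show "F \<in> borel_measurable borel"
    using F_meas by (simp add: borel_prod)
  show "norm (F z) \<le> 2 * r\<^sup>2" if "0 < p z" for z
  proof (cases z)
    case (Pair x1 x2)
    with bounded that have "norm x1 \<le> r" "norm x2 \<le> r"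
      by auto
    then have "(norm x1)\<^sup>2 \<le> r\<^sup>2" "(norm x2)\<^sup>2 \<le> r\<^sup>2"
      by (auto intro!: power_mono)
    then have "(norm x1)\<^sup>2 + (norm x2)\<^sup>2 \<le> 2 * r\<^sup>2"
      by simp
    then show ?thesis
      using F_norm[of x1 x2] by (simp add: Pair)
  qed
qed

lemma loewner_ge_mat_expect:
  assumes F_int: "\<And>j k. integrable lborel (\<lambda>z. p z * (F z $ j $ k))"
    and G_int: "\<And>j k. integrable lborel (\<lambda>z. p z * (G z $ j $ k))"
    and F_sym: "\<And>z. transpose (F z) = F z" and G_sym: "\<And>z. transpose (G z) = G z"
    and quadratic_le: "\<And>v. c * (\<integral>z. p z * (v \<bullet> (G z *v v)) \<partial>lborel)
                            \<le> (\<integral>z. p z * (v \<bullet> (F z *v v)) \<partial>lborel)"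
  shows "loewner_ge (mat_expect p F) (c *\<^sub>R mat_expect p G)"
  unfolding loewner_ge_def psd_def
proof (intro conjI allI)
  have transpose_diff: "transpose (A - B) = transpose A - transpose B" for A B :: "real^'n^'n"
    by (simp add: transpose_def vec_eq_iff)
  show "transpose (mat_expect p F - c *\<^sub>R mat_expect p G) = mat_expect p F - c *\<^sub>R mat_expect p G"
    by (simp add: transpose_diff transpose_scalar transpose_mat_expect F_sym G_sym)
  show "0 \<le> v \<bullet> ((mat_expect p F - c *\<^sub>R mat_expect p G) *v v)" for v
    using quadratic_le[of v]
    by (simp add: matrix_vector_mult_diff_rdistrib inner_diff_right scaleR_matrix_vector_assoc[symmetric]
        quadratic_form_mat_expect[OF F_int] quadratic_form_mat_expect[OF G_int])
qed

definition argmax_outer :: "real^'d \<Rightarrow> (real^'d) \<times> (real^'d) \<Rightarrow> real^'d^'d" where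
  "argmax_outer \<beta> = (\<lambda>(x1, x2). (if x1 \<bullet> \<beta> \<ge> x2 \<bullet> \<beta> then outer x1 else 0)
                               + (if x2 \<bullet> \<beta> \<ge> x1 \<bullet> \<beta> then outer x2 else 0))"

lemma borel_measurable_argmax_outer: "argmax_outer \<beta> \<in> borel_measurable borel"
  unfolding argmax_outer_def borel_prod[symmetric] by measurable

lemma transpose_argmax_outer: "transpose (argmax_outer \<beta> z) = argmax_outer \<beta> z"
  by (cases z) (simp add: argmax_outer_def transpose_def vec_eq_iff outer_def mult.commute)

lemma quadratic_form_argmax_outer:
  "v \<bullet> (argmax_outer \<beta> (x1, x2) *v v)
     = (if x1 \<bullet> \<beta> \<ge> x2 \<bullet> \<beta> then (v \<bullet> x1)\<^sup>2 else 0) + (if x2 \<bullet> \<beta> \<ge> x1 \<bullet> \<beta> then (v \<bullet> x2)\<^sup>2 else 0)"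
  by (simp add: argmax_outer_def matrix_vector_mult_add_rdistrib inner_add_right quadratic_form_outer)

lemma quadratic_form_outer_le_argmax_outer_reflect:
  "v \<bullet> ((outer x1 + outer x2) *v v)
     \<le> v \<bullet> (argmax_outer \<beta> (x1, x2) *v v) + v \<bullet> (argmax_outer \<beta> (- x1, - x2) *v v)"
  by (auto simp: quadratic_form_argmax_outer quadratic_form_outer matrix_vector_mult_add_rdistrib inner_add_right)

lemma integral_quadratic_form_outer_sum_le:
  fixes p :: "(real^'d) \<times> (real^'d) \<Rightarrow> real"
  assumes [measurable]: "p \<in> borel_measurable borel"
    and p_nonneg: "\<And>z. 0 \<le> p z" and p_int: "integrable lborel p"
    and p_one: "(\<integral>z. p z \<partial>lborel) = 1"
    and relaxed_sym: "\<And>x1 x2. p (- x1, - x2) \<le> \<nu> * p (x1, x2)"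
    and S_int: "\<And>j k. integrable lborel (\<lambda>z. p z * ((\<lambda>(x1, x2). outer x1 + outer x2) z $ j $ k))"
    and argmax_int: "\<And>j k. integrable lborel (\<lambda>z. p z * (argmax_outer \<beta> z $ j $ k))"
  shows "(\<integral>z. p z * (v \<bullet> ((\<lambda>(x1, x2). outer x1 + outer x2) z *v v)) \<partial>lborel)
           \<le> 2 * \<nu> * (\<integral>z. p z * (v \<bullet> (argmax_outer \<beta> z *v v)) \<partial>lborel)"
proof (rule integral_le_of_reflection_cover)
  show "(\<lambda>z. v \<bullet> (argmax_outer \<beta> z *v v)) \<in> borel_measurable borel"
    using measurable_compose[OF borel_measurable_argmax_outer borel_measurable_quadratic_form] .
  show "p (- z) \<le> \<nu> * p z" for z
    using relaxed_sym by (cases z) simp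
  show "0 \<le> v \<bullet> (argmax_outer \<beta> z *v v)" for z
    by (cases z) (simp add: quadratic_form_argmax_outer)
  show "v \<bullet> ((\<lambda>(x1, x2). outer x1 + outer x2) z *v v)
          \<le> v \<bullet> (argmax_outer \<beta> z *v v) + v \<bullet> (argmax_outer \<beta> (- z) *v v)" for z
    by (cases z) (simp add: quadratic_form_outer_le_argmax_outer_reflect)
qed (use p_nonneg p_int p_one integrable_density_quadratic_form[OF argmax_int]
      integrable_density_quadratic_form[OF S_int] in auto)

theorem lemma2:
  fixes p :: "(real^'d) \<times> (real^'d) \<Rightarrow> real"
    and \<nu> x_max :: real
    and \<beta> :: "real^'d"
  assumes p_meas: "p \<in> borel_measurable lborel"
    and p_nonneg: "\<And>z. 0 \<le> p z"
    and p_int: "integrable lborel p"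
    and p_one: "(\<integral> z. p z \<partial>lborel) = 1"
    and bounded: "\<And>x1 x2. 0 < p (x1, x2) \<Longrightarrow> norm x1 \<le> x_max \<and> norm x2 \<le> x_max"
    and nu_pos: "0 < \<nu>"
    and relaxed_sym: "\<And>x1 x2. p (-x1, -x2) \<le> \<nu> * p (x1, x2)"
  shows "loewner_ge
     (mat_expect p (\<lambda>(x1, x2). if x1 \<bullet> \<beta> \<ge> x2 \<bullet> \<beta> then outer x1 else 0)
      + mat_expect p (\<lambda>(x1, x2). if x2 \<bullet> \<beta> \<ge> x1 \<bullet> \<beta> then outer x2 else 0))
     ((1 / \<nu>) *\<^sub>R ((1/2) *\<^sub>R mat_expect p (\<lambda>(x1, x2). outer x1 + outer x2)))"
proof -
  define F1 :: "(real^'d) \<times> (real^'d) \<Rightarrow> real^'d^'d"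
    where "F1 = (\<lambda>(x1, x2). if x1 \<bullet> \<beta> \<ge> x2 \<bullet> \<beta> then outer x1 else 0)"
  define F2 :: "(real^'d) \<times> (real^'d) \<Rightarrow> real^'d^'d"
    where "F2 = (\<lambda>(x1, x2). if x2 \<bullet> \<beta> \<ge> x1 \<bullet> \<beta> then outer x2 else 0)"
  define S :: "(real^'d) \<times> (real^'d) \<Rightarrow> real^'d^'d"
    where "S = (\<lambda>(x1, x2). outer x1 + outer x2)"
  note entry_int = integrable_density_mult_entry_outer_dominated[OF p_int p_nonneg bounded]
  have F1_int: "integrable lborel (\<lambda>z. p z * (F1 z $ j $ k))"
    and F2_int: "integrable lborel (\<lambda>z. p z * (F2 z $ j $ k))"
    and S_int: "integrable lborel (\<lambda>z. p z * (S z $ j $ k))" for j k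
    unfolding F1_def F2_def S_def by (rule entry_int; auto simp: norm_outer intro: norm_triangle_le)+
  have argmax_eq: "argmax_outer \<beta> = (\<lambda>z. F1 z + F2 z)"
    by (auto simp: argmax_outer_def F1_def F2_def)
  have argmax_int: "integrable lborel (\<lambda>z. p z * (argmax_outer \<beta> z $ j $ k))" for j k
    using F1_int F2_int by (simp add: argmax_eq distrib_left)
  have S_sym: "transpose (S z) = S z" for z
    by (cases z) (simp add: S_def transpose_def vec_eq_iff outer_def mult.commute)
  have "(1 / \<nu>) * (1 / 2) * (\<integral>z. p z * (v \<bullet> (S z *v v)) \<partial>lborel)
      \<le> (\<integral>z. p z * (v \<bullet> (argmax_outer \<beta> z *v v)) \<partial>lborel)" for v
    using integral_quadratic_form_outer_sum_le[OF p_meas[unfolded measurable_lborel2] p_nonneg p_int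
        p_one relaxed_sym S_int[unfolded S_def] argmax_int] nu_pos
    by (simp add: S_def field_simps)
  then have "loewner_ge (mat_expect p (argmax_outer \<beta>)) (((1 / \<nu>) * (1 / 2)) *\<^sub>R mat_expect p S)"
    by (intro loewner_ge_mat_expect argmax_int S_int transpose_argmax_outer S_sym)
  then show ?thesis
    using mat_expect_add[OF F1_int F2_int] by (simp add: argmax_eq F1_def F2_def S_def)
qed

end
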